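(* Let $\gamma>0$ and $\beta:\mathcal S\to(0,+\infty)$ of class $\mathcal C^1$ satisfy $x\beta_x(x,y)+\beta(x,y)>0$ for all $(x,y)\in\mathcal S$. Consider the uncontrolled BF-SIR model with initial condition $(x_0,y_0)\in\mathcal S$, $y_0>0$. Then: (i) if $R(x_0,y_0)\le1$, then $t\mapsto y(t)$ is strictly decreasing on $[0,\infty)$; (ii) if $R(x_0,y_0)>1$, then there exists a finite time $\hat t$ such that $t\mapsto y(t)$ is strictly increasing on $[0,\hat t]$ and strictly decreasing on $[\hat t,\infty)$.
   Context: $\mathcal S=\{(x,y)\in\mathbb R^2_+: x+y\le1\}$. Reproduction number $R(x,y)=\frac1\gamma\beta(x,y)x$. The uncontrolled BF-SIR model is $\dot x=-\gamma R(x,y)y$, $\dot y=\gamma(R(x,y)-1)y$; for every initial condition in $\mathcal S$ it has a unique $\mathcal C^1$ solution remaining in $\mathcal S$. *)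

theory Defs
  imports "HOL-Analysis.Analysis"
begin

definition SIR_S :: "(real \<times> real) set" where
  "SIR_S = {(x, y). 0 \<le> x \<and> 0 \<le> y \<and> x + y \<le> 1}"

definition repr_num :: "real \<Rightarrow> (real \<times> real \<Rightarrow> real) \<Rightarrow> real \<Rightarrow> real \<Rightarrow> real" where
  "repr_num \<gamma> \<beta> x y = (1 / \<gamma>) * \<beta> (x, y) * x"

definition C1_on_with_partials ::
  "(real \<times> real \<Rightarrow> real) \<Rightarrow> (real \<times> real \<Rightarrow> real) \<Rightarrow> (real \<times> real \<Rightarrow> real) \<Rightarrow> (real \<times> real) set \<Rightarrow> bool" where
  "C1_on_with_partials f fx fy A \<longleftrightarrow>
     (\<forall>p\<in>A. (f has_derivative (\<lambda>(h, k). fx p * h + fy p * k)) (at p within A))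
     \<and> continuous_on A fx \<and> continuous_on A fy"

end

(*
  Write y' = g y with g = beta(x,y) x - gamma = gamma (R - 1); the sign of y' is the sign of g.
  At every zero of g along the trajectory, x' = -gamma y and y' = 0, so
  g' = -gamma y (x beta_x + beta) < 0: g crosses zero at most once, and downwards.
  Hence y increases while g > 0 and decreases from the first time g <= 0 on.
  Such a time exists: otherwise y >= y(0) and x' <= -gamma y(0) would push x below 0.
  Positivity of y, needed for all sign arguments, follows from y' >= -gamma y.
*)
theory Submission
  imports Defs
begin

lemma DERIV_within_atLeast_imp_DERIV:
  fixes f :: "real \<Rightarrow> real"
  assumes "(f has_real_derivative D) (at t within {a..})" "a < t"
  shows "DERIV f t :> D"
proof -
  have "at t within {a..} = at t"
    using \<open>a < t\<close> by (intro at_within_interior) simp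
  with assms(1) show ?thesis by simp
qed

lemma DERIV_within_atLeast_pos_imp_less:
  fixes f f' :: "real \<Rightarrow> real"
  assumes deriv: "\<And>t. a \<le> t \<Longrightarrow> (f has_real_derivative f' t) (at t within {a..})"
    and "a \<le> s" "s < t" and pos: "\<And>u. s < u \<Longrightarrow> u < t \<Longrightarrow> 0 < f' u"
  shows "f s < f t"
proof (rule DERIV_pos_imp_increasing_open[OF \<open>s < t\<close>])
  fix u assume "s < u" "u < t"
  moreover from \<open>s < u\<close> \<open>a \<le> s\<close> have "a < u" by simp
  ultimately show "\<exists>l. DERIV f u :> l \<and> 0 < l"
    using DERIV_within_atLeast_imp_DERIV[OF deriv] pos by auto
next
  have "continuous_on {a..} f" by (rule DERIV_continuous_on) (use deriv in auto)
  then show "continuous_on {s..t} f" by (rule continuous_on_subset) (use \<open>a \<le> s\<close> in auto)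
qed

lemma DERIV_within_atLeast_neg_imp_less:
  fixes f f' :: "real \<Rightarrow> real"
  assumes deriv: "\<And>t. a \<le> t \<Longrightarrow> (f has_real_derivative f' t) (at t within {a..})"
    and "a \<le> s" "s < t" and neg: "\<And>u. s < u \<Longrightarrow> u < t \<Longrightarrow> f' u < 0"
  shows "f t < f s"
proof -
  have "- f s < - f t"
    by (rule DERIV_within_atLeast_pos_imp_less[where f' = "\<lambda>u. - f' u"])
      (use assms in \<open>auto intro: DERIV_minus\<close>)
  then show ?thesis by simp
qed

lemma DERIV_within_atLeast_nonneg_imp_le:
  fixes f f' :: "real \<Rightarrow> real"
  assumes deriv: "\<And>t. a \<le> t \<Longrightarrow> (f has_real_derivative f' t) (at t within {a..})"
    and "a \<le> s" "s \<le> t" and nonneg: "\<And>u. s < u \<Longrightarrow> u < t \<Longrightarrow> 0 \<le> f' u"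
  shows "f s \<le> f t"
proof (rule DERIV_nonneg_imp_increasing_open[OF \<open>s \<le> t\<close>])
  fix u assume "s < u" "u < t"
  moreover from \<open>s < u\<close> \<open>a \<le> s\<close> have "a < u" by simp
  ultimately show "\<exists>l. DERIV f u :> l \<and> 0 \<le> l"
    using DERIV_within_atLeast_imp_DERIV[OF deriv] nonneg by auto
next
  have "continuous_on {a..} f" by (rule DERIV_continuous_on) (use deriv in auto)
  then show "continuous_on {s..t} f" by (rule continuous_on_subset) (use \<open>a \<le> s\<close> in auto)
qed

lemma first_nonpos_point:
  fixes f :: "real \<Rightarrow> real"
  assumes cont: "continuous_on {a..b} f" and "a \<le> b" "f b \<le> 0"
  obtains s where "a \<le> s" "s \<le> b" "f s \<le> 0" "\<And>u. a \<le> u \<Longrightarrow> u < s \<Longrightarrow> 0 < f u"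
proof -
  define Z where "Z = {a..b} \<inter> f -` {..0}"
  have "closed Z"
    unfolding Z_def by (rule continuous_closed_preimage[OF cont]) auto
  moreover have "b \<in> Z" "bdd_below Z"
    using assms by (auto simp: Z_def bdd_below_def)
  ultimately have "Inf Z \<in> Z"
    by (intro closed_contains_Inf) auto
  moreover have "0 < f u" if "a \<le> u" "u < Inf Z" for u
  proof (rule ccontr)
    assume "\<not> 0 < f u"
    with that \<open>Inf Z \<in> Z\<close> have "u \<in> Z" by (auto simp: Z_def)
    with \<open>u < Inf Z\<close> show False using cInf_lower[OF _ \<open>bdd_below Z\<close>] by fastforce
  qed
  ultimately show ?thesis
    using that by (auto simp: Z_def)
qed

text \<open>A first return of \<open>f\<close> to \<open>[0, \<infinity>)\<close> would be a zero approached from below,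
  where the derivative cannot be negative.\<close>
lemma neg_persists_if_zeros_cross_downwards:
  fixes f :: "real \<Rightarrow> real"
  assumes cont: "continuous_on {a..} f"
    and cross: "\<And>t. a \<le> t \<Longrightarrow> f t = 0 \<Longrightarrow> \<exists>D<0. (f has_real_derivative D) (at t within {a..})"
    and "f a \<le> 0" "a < b"
  shows "f b < 0"
proof -
  obtain c where c: "a \<le> c" "c < b" "f c < 0"
  proof (cases "f a = 0")
    case True
    then obtain D where "D < 0" "(f has_real_derivative D) (at a within {a..})"
      using cross by blast
    from has_real_derivative_neg_dec_right[OF this(2,1)]
    obtain d where "0 < d" and dec: "\<And>h. 0 < h \<Longrightarrow> h < d \<Longrightarrow> f (a + h) < f a"
      by auto
    define h where "h = min d (b - a) / 2"
    have "0 < h" "h < d" "a + h < b"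
      using \<open>0 < d\<close> \<open>a < b\<close> by (auto simp: h_def min_def field_simps)
    with dec[of h] True show ?thesis
      by (intro that[of "a + h"]) auto
  next
    case False
    with \<open>f a \<le> 0\<close> show ?thesis
      by (intro that[of a]) (use \<open>a < b\<close> in auto)
  qed
  show "f b < 0"
  proof (rule ccontr)
    assume "\<not> f b < 0"
    have cont_cb: "continuous_on {c..b} f"
      by (rule continuous_on_subset[OF cont]) (use c in auto)
    obtain s where s: "c \<le> s" "s \<le> b" "- f s \<le> 0"
      and before: "\<And>u. c \<le> u \<Longrightarrow> u < s \<Longrightarrow> 0 < - f u"
      by (rule first_nonpos_point[of c b "\<lambda>u. - f u"])
        (use cont_cb \<open>\<not> f b < 0\<close> c in \<open>auto intro: continuous_on_minus\<close>)
    have "c \<noteq> s" using s \<open>f c < 0\<close> by auto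
    with s have "c < s" by simp
    have "f s = 0"
    proof -
      have "continuous_on {c..s} f"
        by (rule continuous_on_subset[OF cont_cb]) (use s in auto)
      then obtain u where "c \<le> u" "u \<le> s" "f u = 0"
        using IVT'[of f c 0 s] s \<open>f c < 0\<close> by auto
      with before[of u] have "u = s" by fastforce
      with \<open>f u = 0\<close> show ?thesis by simp
    qed
    then obtain D where "D < 0" "(f has_real_derivative D) (at s within {a..})"
      using cross[of s] s c by auto
    from has_real_derivative_neg_dec_left[OF this(2,1)]
    obtain d where "0 < d" and dec: "\<And>h. 0 < h \<Longrightarrow> s - h \<in> {a..} \<Longrightarrow> h < d \<Longrightarrow> f s < f (s - h)"
      by auto
    define h where "h = min d (s - c) / 2"
    have "0 < h" "h < d" "c \<le> s - h" "s - h < s"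
      using \<open>0 < d\<close> \<open>c < s\<close> by (auto simp: h_def min_def field_simps)
    with dec[of h] before[of "s - h"] \<open>f s = 0\<close> \<open>a \<le> c\<close> show False
      by auto
  qed
qed

lemma pos_if_DERIV_within_mult_self:
  fixes y h :: "real \<Rightarrow> real"
  assumes deriv: "\<And>t. a \<le> t \<Longrightarrow> (y has_real_derivative h t * y t) (at t within {a..})"
    and h_lower: "\<And>t. a \<le> t \<Longrightarrow> - c \<le> h t" and "0 < y a" "a \<le> t"
  shows "0 < y t"
proof (rule ccontr)
  assume "\<not> 0 < y t"
  have "continuous_on {a..t} y"
    using DERIV_continuous_on[of "{a..}" y] deriv by (force intro: continuous_on_subset)
  moreover have "y t \<le> 0" using \<open>\<not> 0 < y t\<close> by simp
  ultimately obtain s where s: "a \<le> s" "y s \<le> 0" and before: "\<And>u. a \<le> u \<Longrightarrow> u < s \<Longrightarrow> 0 < y u"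
    using first_nonpos_point \<open>a \<le> t\<close> by blast
  define z where "z u = y u * exp (c * u)" for u
  \<comment> \<open>\<open>z' = (h + c) z \<ge> 0\<close> as long as \<open>y > 0\<close>.\<close>
  have "z a \<le> z s"
  proof (rule DERIV_within_atLeast_nonneg_imp_le[of a z])
    fix u assume "a \<le> u"
    have "((\<lambda>u. exp (c * u)) has_real_derivative exp (c * u) * c) (at u within {a..})"
      by (auto intro!: derivative_eq_intros)
    from DERIV_mult[OF deriv[OF \<open>a \<le> u\<close>] this]
    show "(z has_real_derivative (h u + c) * y u * exp (c * u)) (at u within {a..})"
      unfolding z_def by (rule DERIV_cong) (simp add: algebra_simps)
  next
    fix u assume "a < u" "u < s"
    then show "0 \<le> (h u + c) * y u * exp (c * u)"
      using h_lower[of u] before[of u] by simp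
  qed (use s in auto)
  moreover have "0 < z a" "z s \<le> 0"
    using \<open>0 < y a\<close> s by (auto simp: z_def mult_nonpos_nonneg)
  ultimately show False by simp
qed

lemma C1_on_with_partials_continuous_on:
  "C1_on_with_partials f fx fy A \<Longrightarrow> continuous_on A f"
  unfolding C1_on_with_partials_def by (auto intro: has_derivative_continuous_on)

lemma C1_on_with_partials_has_real_derivative_comp:
  assumes C1: "C1_on_with_partials f fx fy A" and path: "\<And>s. s \<in> T \<Longrightarrow> (x s, y s) \<in> A"
    and "t \<in> T" "(x has_real_derivative x') (at t within T)" "(y has_real_derivative y') (at t within T)"
  shows "((\<lambda>s. f (x s, y s)) has_real_derivative fx (x t, y t) * x' + fy (x t, y t) * y')
           (at t within T)"
proof -
  have f: "\<And>p. p \<in> A \<Longrightarrow> (f has_derivative (\<lambda>(h, k). fx p * h + fy p * k)) (at p within A)"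
    using C1 unfolding C1_on_with_partials_def by blast
  have img: "(\<lambda>s. (x s, y s)) ` T \<subseteq> A"
    using path by blast
  have pair: "((\<lambda>s. (x s, y s)) has_derivative (\<lambda>h. (x' * h, y' * h))) (at t within T)"
    using has_derivative_Pair assms(4,5) unfolding has_field_derivative_def by blast
  have "((\<lambda>s. f (x s, y s)) has_derivative
      (\<lambda>h. fx (x t, y t) * (x' * h) + fy (x t, y t) * (y' * h))) (at t within T)"
    using has_derivative_in_compose2[OF f img \<open>t \<in> T\<close> pair] by simp
  then show ?thesis
    unfolding has_field_derivative_def by (rule has_derivative_eq_rhs) (auto simp: algebra_simps)
qed

locale BF_SIR_solution =
  fixes \<gamma> :: real and \<beta> \<beta>x \<beta>y :: "real \<times> real \<Rightarrow> real" and x y :: "real \<Rightarrow> real"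
  assumes gamma_pos: "\<gamma> > 0"
    and beta_pos: "\<forall>p\<in>SIR_S. \<beta> p > 0"
    and beta_C1: "C1_on_with_partials \<beta> \<beta>x \<beta>y SIR_S"
    and beta_cond: "\<forall>a b. (a, b) \<in> SIR_S \<longrightarrow> a * \<beta>x (a, b) + \<beta> (a, b) > 0"
    and stays: "\<forall>t\<ge>0. (x t, y t) \<in> SIR_S"
    and ode_x: "\<forall>t\<ge>0. (x has_real_derivative
                   (- \<gamma> * repr_num \<gamma> \<beta> (x t) (y t) * y t)) (at t within {0..})"
    and ode_y: "\<forall>t\<ge>0. (y has_real_derivative
                   (\<gamma> * (repr_num \<gamma> \<beta> (x t) (y t) - 1) * y t)) (at t within {0..})"
    and y0_pos: "y 0 > 0"
begin

definition growth_rate :: "real \<Rightarrow> real" where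
  "growth_rate t = \<beta> (x t, y t) * x t - \<gamma>"

lemma repr_num_le_one_iff: "repr_num \<gamma> \<beta> (x t) (y t) \<le> 1 \<longleftrightarrow> growth_rate t \<le> 0"
  using gamma_pos by (simp add: repr_num_def growth_rate_def field_simps)

lemma x_deriv:
  "0 \<le> t \<Longrightarrow> (x has_real_derivative - (\<beta> (x t, y t) * x t) * y t) (at t within {0..})"
  using ode_x gamma_pos by (simp add: repr_num_def)

lemma y_deriv:
  assumes "0 \<le> t"
  shows "(y has_real_derivative growth_rate t * y t) (at t within {0..})"
proof -
  have "\<gamma> * (repr_num \<gamma> \<beta> (x t) (y t) - 1) = growth_rate t"
    using gamma_pos by (simp add: repr_num_def growth_rate_def right_diff_distrib)
  with ode_y assms show ?thesis by metis
qed

lemma state_in_S: "0 \<le> t \<Longrightarrow> (x t, y t) \<in> SIR_S"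
  using stays by blast

lemma x_nonneg: "0 \<le> t \<Longrightarrow> 0 \<le> x t"
  and x_le_one: "0 \<le> t \<Longrightarrow> x t \<le> 1"
  by (auto dest!: state_in_S simp: SIR_S_def)

lemma y_pos: "0 \<le> t \<Longrightarrow> 0 < y t"
proof (rule pos_if_DERIV_within_mult_self[OF y_deriv _ y0_pos])
  fix s :: real assume "0 \<le> s"
  then have "0 < \<beta> (x s, y s)"
    using beta_pos state_in_S by blast
  with x_nonneg[OF \<open>0 \<le> s\<close>] show "- \<gamma> \<le> growth_rate s"
    by (simp add: growth_rate_def)
qed

lemma growth_rate_continuous: "continuous_on {0..} growth_rate"
proof -
  have x: "continuous_on {0..} x"
    by (rule DERIV_continuous_on, rule x_deriv) simp
  moreover have "continuous_on {0..} y"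
    by (rule DERIV_continuous_on, rule y_deriv) simp
  ultimately have "continuous_on {0..} (\<lambda>t. (x t, y t))"
    by (rule continuous_on_Pair)
  moreover have "(\<lambda>t. (x t, y t)) ` {0..} \<subseteq> SIR_S"
    using stays by auto
  ultimately have "continuous_on {0..} (\<lambda>t. \<beta> (x t, y t))"
    using continuous_on_compose2[OF C1_on_with_partials_continuous_on[OF beta_C1]] by blast
  from continuous_on_diff[OF continuous_on_mult[OF this x] continuous_on_const]
  show ?thesis
    unfolding growth_rate_def[abs_def] .
qed

lemma growth_rate_deriv_at_zero:
  assumes "0 \<le> t" "growth_rate t = 0"
  shows "(growth_rate has_real_derivative - \<gamma> * y t * (x t * \<beta>x (x t, y t) + \<beta> (x t, y t)))
           (at t within {0..})"
proof -
  have bx: "\<beta> (x t, y t) * x t = \<gamma>"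
    using assms(2) by (simp add: growth_rate_def)
  have dx: "(x has_real_derivative - \<gamma> * y t) (at t within {0..})"
    using x_deriv[OF assms(1)] by (simp add: bx)
  have dy: "(y has_real_derivative 0) (at t within {0..})"
    using y_deriv[OF assms(1)] by (simp add: assms(2))
  have "((\<lambda>s. \<beta> (x s, y s)) has_real_derivative \<beta>x (x t, y t) * (- \<gamma> * y t) + \<beta>y (x t, y t) * 0)
      (at t within {0..})"
    by (rule C1_on_with_partials_has_real_derivative_comp[OF beta_C1 _ _ dx dy])
      (use stays assms(1) in auto)
  from DERIV_diff[OF DERIV_mult[OF this dx] DERIV_const[of \<gamma>]]
  show ?thesis
    unfolding growth_rate_def[abs_def] by (rule DERIV_cong) (simp add: algebra_simps)
qed

lemma growth_rate_neg_after_nonpos: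
  assumes "0 \<le> s" "growth_rate s \<le> 0" "s < t"
  shows "growth_rate t < 0"
proof (rule neg_persists_if_zeros_cross_downwards[where f = growth_rate and a = s])
  show "continuous_on {s..} growth_rate"
    by (rule continuous_on_subset[OF growth_rate_continuous]) (use assms in auto)
next
  fix u assume "s \<le> u" "growth_rate u = 0"
  with assms have "0 \<le> u" by simp
  have "0 < x u * \<beta>x (x u, y u) + \<beta> (x u, y u)"
    using beta_cond state_in_S[OF \<open>0 \<le> u\<close>] by blast
  with y_pos[OF \<open>0 \<le> u\<close>] gamma_pos
  have "- \<gamma> * y u * (x u * \<beta>x (x u, y u) + \<beta> (x u, y u)) < 0"
    by (simp add: mult_pos_pos)
  moreover have "(growth_rate has_real_derivative - \<gamma> * y u * (x u * \<beta>x (x u, y u) + \<beta> (x u, y u)))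
      (at u within {s..})"
    by (rule has_field_derivative_subset[OF growth_rate_deriv_at_zero])
      (use \<open>0 \<le> u\<close> \<open>growth_rate u = 0\<close> assms in auto)
  ultimately show "\<exists>D<0. (growth_rate has_real_derivative D) (at u within {s..})"
    by blast
qed (use assms in auto)

lemma y_increasing:
  assumes "0 \<le> s" "s < t" and pos: "\<And>u. s < u \<Longrightarrow> u < t \<Longrightarrow> 0 < growth_rate u"
  shows "y s < y t"
proof (rule DERIV_within_atLeast_pos_imp_less[OF y_deriv assms(1,2)])
  fix u assume "s < u" "u < t"
  with pos[of u] y_pos[of u] \<open>0 \<le> s\<close> show "0 < growth_rate u * y u"
    by simp
qed

lemma y_decreasing_after_nonpos:
  assumes "0 \<le> s" "growth_rate s \<le> 0" "s \<le> t1" "t1 < t2"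
  shows "y t2 < y t1"
proof (rule DERIV_within_atLeast_neg_imp_less[OF y_deriv _ \<open>t1 < t2\<close>])
  show "0 \<le> t1"
    using assms by linarith
next
  fix u assume "t1 < u" "u < t2"
  with assms have "s < u" "0 \<le> u"
    by linarith+
  with growth_rate_neg_after_nonpos[OF assms(1,2)] y_pos show "growth_rate u * y u < 0"
    by (simp add: mult_neg_pos)
qed

text \<open>Otherwise \<open>x' \<le> - \<gamma> y 0\<close> throughout, and \<open>x\<close> would leave \<open>[0, 1]\<close> before
  time \<open>2 / (\<gamma> y 0)\<close>.\<close>
lemma growth_rate_eventually_nonpos: "\<exists>t\<ge>0. growth_rate t \<le> 0"
proof (rule ccontr)
  assume "\<not> (\<exists>t\<ge>0. growth_rate t \<le> 0)"
  then have pos: "0 < growth_rate t" if "0 \<le> t" for t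
    using that not_le by blast
  have y_ge: "y 0 \<le> y t" if "0 \<le> t" for t
  proof (cases "t = 0")
    case False
    with that have "y 0 < y t"
      by (intro y_increasing pos) auto
    then show ?thesis by simp
  qed simp
  define T where "T = 2 / (\<gamma> * y 0)"
  have "0 < T"
    using gamma_pos y0_pos by (simp add: T_def)
  define w where "w u = - x u - \<gamma> * y 0 * u" for u
  have "w 0 \<le> w T"
  proof (rule DERIV_within_atLeast_nonneg_imp_le[where f = w and a = 0])
    fix u :: real assume "0 \<le> u"
    from DERIV_diff[OF DERIV_minus[OF x_deriv[OF this]] DERIV_cmult[OF DERIV_ident, of "\<gamma> * y 0"]]
    show "(w has_real_derivative \<beta> (x u, y u) * x u * y u - \<gamma> * y 0) (at u within {0..})"
      unfolding w_def[abs_def] by simp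
  next
    fix u :: real assume "0 < u" "u < T"
    then have "\<gamma> \<le> \<beta> (x u, y u) * x u" "y 0 \<le> y u"
      using pos[of u] y_ge[of u] by (simp_all add: growth_rate_def)
    then have "\<gamma> * y 0 \<le> \<beta> (x u, y u) * x u * y u"
      using gamma_pos y0_pos by (intro mult_mono) auto
    then show "0 \<le> \<beta> (x u, y u) * x u * y u - \<gamma> * y 0"
      by simp
  qed (use \<open>0 < T\<close> in auto)
  then have "x T + 2 \<le> x 0"
    using gamma_pos y0_pos by (simp add: w_def T_def)
  with x_nonneg[of T] x_le_one[of 0] \<open>0 < T\<close> show False
    by simp
qed

lemma first_time_growth_rate_nonpos:
  obtains th where "0 \<le> th" "growth_rate th \<le> 0" "\<And>u. 0 \<le> u \<Longrightarrow> u < th \<Longrightarrow> 0 < growth_rate u"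
proof -
  obtain t where "0 \<le> t" "growth_rate t \<le> 0"
    using growth_rate_eventually_nonpos by blast
  moreover have "continuous_on {0..t} growth_rate"
    by (rule continuous_on_subset[OF growth_rate_continuous]) auto
  ultimately show ?thesis
    using first_nonpos_point that by blast
qed

end

theorem proposition2:
  fixes \<gamma> :: real and \<beta> \<beta>x \<beta>y :: "real \<times> real \<Rightarrow> real"
    and x y :: "real \<Rightarrow> real" and x0 y0 :: real
  assumes gamma_pos: "\<gamma> > 0"
    and beta_pos: "\<forall>p\<in>SIR_S. \<beta> p > 0"
    and beta_C1: "C1_on_with_partials \<beta> \<beta>x \<beta>y SIR_S"
    and beta_cond: "\<forall>a b. (a, b) \<in> SIR_S \<longrightarrow> a * \<beta>x (a, b) + \<beta> (a, b) > 0"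
    and init_in: "(x0, y0) \<in> SIR_S" and y0_pos: "y0 > 0"
    and x_init: "x 0 = x0" and y_init: "y 0 = y0"
    and stays: "\<forall>t\<ge>0. (x t, y t) \<in> SIR_S"
    and ode_x: "\<forall>t\<ge>0. (x has_real_derivative
                   (- \<gamma> * repr_num \<gamma> \<beta> (x t) (y t) * y t)) (at t within {0..})"
    and ode_y: "\<forall>t\<ge>0. (y has_real_derivative
                   (\<gamma> * (repr_num \<gamma> \<beta> (x t) (y t) - 1) * y t)) (at t within {0..})"
  shows "(repr_num \<gamma> \<beta> x0 y0 \<le> 1 \<longrightarrow>
            (\<forall>s t. 0 \<le> s \<and> s < t \<longrightarrow> y t < y s))
       \<and> (repr_num \<gamma> \<beta> x0 y0 > 1 \<longrightarrow>
            (\<exists>th::real. 0 \<le> th \<and>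
               (\<forall>s t. 0 \<le> s \<and> s < t \<and> t \<le> th \<longrightarrow> y s < y t) \<and>
               (\<forall>s t. th \<le> s \<and> s < t \<longrightarrow> y t < y s)))"
proof -
  interpret BF_SIR_solution \<gamma> \<beta> \<beta>x \<beta>y x y
    using gamma_pos beta_pos beta_C1 beta_cond stays ode_x ode_y y0_pos y_init
    by unfold_locales simp_all
  show ?thesis
  proof (intro conjI impI)
    assume "repr_num \<gamma> \<beta> x0 y0 \<le> 1"
    then have "growth_rate 0 \<le> 0"
      using repr_num_le_one_iff[of 0] x_init y_init by simp
    then show "\<forall>s t. 0 \<le> s \<and> s < t \<longrightarrow> y t < y s"
      using y_decreasing_after_nonpos[of 0] by auto
  next
    \<comment> \<open>\<open>R > 1\<close> only makes the turning time positive, which the statement does not require.\<close>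
    obtain th where "0 \<le> th" "growth_rate th \<le> 0"
      and before: "\<And>u. 0 \<le> u \<Longrightarrow> u < th \<Longrightarrow> 0 < growth_rate u"
      using first_time_growth_rate_nonpos by blast
    show "\<exists>th. 0 \<le> th \<and>
               (\<forall>s t. 0 \<le> s \<and> s < t \<and> t \<le> th \<longrightarrow> y s < y t) \<and>
               (\<forall>s t. th \<le> s \<and> s < t \<longrightarrow> y t < y s)"
    proof (intro exI[of _ th] conjI allI impI)
      fix s t assume "0 \<le> s \<and> s < t \<and> t \<le> th"
      then show "y s < y t"
        using before by (intro y_increasing) auto
    next
      fix s t assume "th \<le> s \<and> s < t"
      then show "y t < y s"
        using y_decreasing_after_nonpos[OF \<open>0 \<le> th\<close> \<open>growth_rate th \<le> 0\<close>] by blast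
    qed fact
  qed
qed

end
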